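(* Let $p,q\in\{y=0\}\subset\mathbb R^2$, $p\ne q$, $L=|p-q|$. For $\epsilon\in(0,1]$ let $\Upsilon_\epsilon\in H^2([0,L];\mathbb R^2)$ be a curve with constant speed $|\partial_x\Upsilon_\epsilon|\equiv\ell(\Upsilon_\epsilon)/L$, $\Upsilon_\epsilon(0)=p$, $\Upsilon_\epsilon(L)=q$, horizontal tangent at $x=0$ and $x=L$, and suppose there is $C>0$ with $\ell(\Upsilon_\epsilon)-|p-q|\le C\epsilon^{1/2}$ and $\epsilon^{1/2}\int_0^{\ell(\Upsilon_\epsilon)}\kappa_{\gamma_\epsilon}^2\,ds\le C$ for all $\epsilon$. Let $\theta_\epsilon\in H^1([0,L])$ be a lifting with $\partial_x\Upsilon_\epsilon=\frac{\ell(\Upsilon_\epsilon)}{L}(\cos\theta_\epsilon,\sin\theta_\epsilon)$, and let $\Phi(\theta)=\int_0^\theta2\sqrt{1-\cos\phi}\,d\phi$. Then $$\lim_{\epsilon\to0^+}\Big\|\frac{2\pi}{8\sqrt2}\partial_x(\Phi\circ\theta_\epsilon)-\partial_x\theta_\epsilon\Big\|_{\mathrm{flat},[0,L]}=0.$$ In particular, if $\epsilon_k\to0^+$ and $\omega\in M_{\mathrm{fin},\mathbb Z}([0,L])$ are such that $\|\kappa_{\Upsilon_{\epsilon_k}}-\omega\|_{\mathrm{flat},[0,L]}\to0$, then $\frac{2\pi}{8\sqrt2}\partial_x(\Phi\circ\theta_{\epsilon_k})\to\omega$ in the flat norm.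
   Context: $\ell(\Upsilon)=\int_0^L|\partial_x\Upsilon|\,dx$; $\gamma_\epsilon$ is the arclength reparametrization of $\Upsilon_\epsilon$ and $\kappa_{\gamma_\epsilon}$ its curvature; $\kappa_{\Upsilon_\epsilon}=\frac{L}{\ell(\Upsilon_\epsilon)}\partial_x\theta_\epsilon$. $M_{\mathrm{fin},\mathbb Z}([0,L])$ is the set of measures $2\pi\sum_{j=1}^Nc_j\delta_{x_j}$ with $c_j\in\mathbb Z$, $0\le x_1<\dots<x_N\le L$. $\|\nu\|_{\mathrm{flat},[0,L]}=\sup\{\int\varphi\,d\nu:\varphi\in C^{0,1}([0,L]),\ \|\varphi\|_{L^\infty}+\mathrm{Lip}(\varphi)\le1\}$. *)

theory Defs
  imports "HOL-Analysis.Analysis"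
begin

text \<open>f is absolutely continuous on [a,b] with (a.e.) derivative g, g in L^1([a,b]):
  f x = f a + integral of g over [a,x] for all x in [a,b]  (i.e. f in W^{1,1}, weak derivative g).\<close>
definition W11_deriv :: "real \<Rightarrow> real \<Rightarrow> (real \<Rightarrow> 'a::euclidean_space) \<Rightarrow> (real \<Rightarrow> 'a) \<Rightarrow> bool" where
  "W11_deriv a b f g \<longleftrightarrow> g absolutely_integrable_on {a..b} \<and>
     (\<forall>x\<in>{a..b}. (g has_integral (f x - f a)) {a..x})"

definition H1_deriv :: "real \<Rightarrow> real \<Rightarrow> (real \<Rightarrow> 'a::euclidean_space) \<Rightarrow> (real \<Rightarrow> 'a) \<Rightarrow> bool" where
  "H1_deriv a b f g \<longleftrightarrow> W11_deriv a b f g \<and> (\<lambda>x. (norm (g x))\<^sup>2) integrable_on {a..b}"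

definition H2_derivs :: "real \<Rightarrow> real \<Rightarrow> (real \<Rightarrow> 'a::euclidean_space) \<Rightarrow> (real \<Rightarrow> 'a) \<Rightarrow> (real \<Rightarrow> 'a) \<Rightarrow> bool" where
  "H2_derivs a b f g1 g2 \<longleftrightarrow> H1_deriv a b f g1 \<and> H1_deriv a b g1 g2"

definition curve_length :: "real \<Rightarrow> (real \<Rightarrow> real \<times> real) \<Rightarrow> real" where
  "curve_length L V = integral {0..L} (\<lambda>x. norm (V x))"

definition Phi :: "real \<Rightarrow> real" where
  "Phi t = (if 0 \<le> t then integral {0..t} (\<lambda>u. 2 * sqrt (1 - cos u))
            else - integral {t..0} (\<lambda>u. 2 * sqrt (1 - cos u)))"

definition flat_test :: "real \<Rightarrow> (real \<Rightarrow> real) \<Rightarrow> bool" where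
  "flat_test L \<phi> \<longleftrightarrow> (\<exists>M K. (\<forall>x\<in>{0..L}. \<bar>\<phi> x\<bar> \<le> M) \<and>
      (\<forall>x\<in>{0..L}. \<forall>y\<in>{0..L}. \<bar>\<phi> x - \<phi> y\<bar> \<le> K * \<bar>x - y\<bar>) \<and> M + K \<le> 1)"

text \<open>A (signed) measure nu on [0,L] is represented by its action phi \<mapsto> \<integral> phi d nu on test functions.\<close>
definition flat_norm :: "real \<Rightarrow> ((real \<Rightarrow> real) \<Rightarrow> real) \<Rightarrow> real" where
  "flat_norm L T = Sup {T \<phi> | \<phi>. flat_test L \<phi>}"

definition dens :: "real \<Rightarrow> (real \<Rightarrow> real) \<Rightarrow> (real \<Rightarrow> real) \<Rightarrow> real" where
  "dens L f = (\<lambda>\<phi>. integral {0..L} (\<lambda>x. \<phi> x * f x))"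

definition atoms :: "nat \<Rightarrow> (nat \<Rightarrow> int) \<Rightarrow> (nat \<Rightarrow> real) \<Rightarrow> (real \<Rightarrow> real) \<Rightarrow> real" where
  "atoms N c xs = (\<lambda>\<phi>. 2 * pi * (\<Sum>j<N. of_int (c j) * \<phi> (xs j)))"

text \<open>Admissible data for an element of M_fin,Z([0,L]): 0 \<le> x_1 < ... < x_N \<le> L.\<close>
definition Mfin_data :: "real \<Rightarrow> nat \<Rightarrow> (nat \<Rightarrow> real) \<Rightarrow> bool" where
  "Mfin_data L N xs \<longleftrightarrow> (\<forall>j<N. 0 \<le> xs j \<and> xs j \<le> L) \<and> (\<forall>i j. i < j \<and> j < N \<longrightarrow> xs i < xs j)"

end

theory Submission
  imports Defs "HOL-Real_Asymp.Real_Asymp"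
begin

text \<open>
  Put \<open>g t = 2\<pi>/(8\<surd>2) \<Phi>(t) - t\<close> (\<open>Phi_defect\<close>). Since \<open>\<Phi>\<close> gains \<open>8\<surd>2\<close> over each
  period \<open>2\<pi>\<close> and \<open>\<Phi>(\<pi>) = 4\<surd>2\<close>, \<open>g\<close> vanishes on \<open>\<pi>\<int>\<close>; as \<open>0 \<le> \<Phi>' \<le> 2\<surd>2\<close>, it is
  1-Lipschitz, hence \<open>|g t| \<le> 3 |sin t|\<close>. The measure in question is the derivative of
  \<open>g \<circ> \<theta>\<^sub>\<epsilon>\<close>, which vanishes at both ends because the tangent is horizontal there; integrating
  by parts against a 1-Lipschitz test function bounds its flat norm by \<open>\<integral>|g \<circ> \<theta>\<^sub>\<epsilon>|\<close>.
  If \<open>s\<close> is the constant speed, comparing the length \<open>s L\<close> with the chord \<open>L\<close> gives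
  \<open>\<integral>(1 - \<sigma> cos \<theta>\<^sub>\<epsilon>) = L - L/s \<le> (s - 1) L \<le> C \<surd>\<epsilon>\<close>, where \<open>\<sigma> = \<plusminus>1\<close> is the direction
  of \<open>q - p\<close>; since \<open>sin\<^sup>2 \<le> 2(1 - \<sigma> cos)\<close>, AM-GM gives \<open>\<integral>|sin \<theta>\<^sub>\<epsilon>| = O(\<epsilon>\<^sup>1\<^sup>/\<^sup>4)\<close>. The second claim follows
  because \<open>s \<rightarrow> 1\<close>.
\<close>

section \<open>The function \<open>\<Phi>\<close>\<close>

definition Phi_integrand :: "real \<Rightarrow> real" where
  "Phi_integrand u = 2 * sqrt (1 - cos u)"

lemma continuous_on_Phi_integrand: "continuous_on S Phi_integrand"
  unfolding Phi_integrand_def by (intro continuous_intros)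

lemma Phi_eq_integral_diff:
  assumes "0 \<le> R" "-R \<le> t"
  shows "Phi t = integral {-R..t} Phi_integrand - integral {-R..0} Phi_integrand"
proof (cases "0 \<le> t")
  case True
  have "integral {-R..0} Phi_integrand + integral {0..t} Phi_integrand = integral {-R..t} Phi_integrand"
    using assms True by (intro Henstock_Kurzweil_Integration.integral_combine
        integrable_continuous_interval continuous_on_Phi_integrand) auto
  with True show ?thesis by (simp add: Phi_def Phi_integrand_def[symmetric])
next
  case False
  have "integral {-R..t} Phi_integrand + integral {t..0} Phi_integrand = integral {-R..0} Phi_integrand"
    using assms False by (intro Henstock_Kurzweil_Integration.integral_combine
        integrable_continuous_interval continuous_on_Phi_integrand) auto
  with False show ?thesis by (simp add: Phi_def Phi_integrand_def[symmetric])
qed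

lemma has_real_derivative_Phi: "(Phi has_real_derivative Phi_integrand t) (at t)"
proof -
  define R where "R = \<bar>t\<bar> + 1"
  have R: "0 \<le> R" "-R < t" "t < R"
    unfolding R_def by auto
  have "((\<lambda>x. integral {-R..x} Phi_integrand) has_real_derivative Phi_integrand t) (at t within {-R..R})"
    using R by (intro integral_has_real_derivative continuous_on_Phi_integrand) auto
  then have "((\<lambda>x. integral {-R..x} Phi_integrand - integral {-R..0} Phi_integrand)
      has_real_derivative Phi_integrand t) (at t)"
    using R by (auto simp: at_within_Icc_at intro!: derivative_eq_intros)
  then show ?thesis
    by (rule has_field_derivative_transform_within_open[where S = "{-R<..}"])
       (use R in \<open>auto simp: Phi_eq_integral_diff[of R]\<close>)
qed

lemma Phi_eq_cos_half:
  assumes "0 \<le> t" "t \<le> 2 * pi"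
  shows "Phi t = 4 * sqrt 2 - 4 * sqrt 2 * cos (t / 2)"
proof -
  have "((\<lambda>u. 2 * sqrt 2 * sin (u / 2)) has_integral
      (- 4 * sqrt 2 * cos (t / 2)) - (- 4 * sqrt 2 * cos (0 / 2))) {0..t}"
    using assms by (intro fundamental_theorem_of_calculus)
      (auto intro!: derivative_eq_intros simp: has_real_derivative_iff_has_vector_derivative[symmetric])
  then have "((\<lambda>u. 2 * sqrt 2 * sin (u / 2)) has_integral 4 * sqrt 2 - 4 * sqrt 2 * cos (t / 2)) {0..t}"
    by simp
  moreover have "2 * sqrt 2 * sin (u / 2) = Phi_integrand u" if "u \<in> {0..t}" for u
  proof -
    have "0 \<le> sin (u / 2)"
      using that assms by (intro sin_ge_zero) auto
    then show ?thesis
      using cos_double_sin[of "u / 2"] by (simp add: Phi_integrand_def real_sqrt_mult)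
  qed
  ultimately have "(Phi_integrand has_integral 4 * sqrt 2 - 4 * sqrt 2 * cos (t / 2)) {0..t}"
    by (rule has_integral_eq[rotated])
  with assms show ?thesis
    by (simp add: Phi_def Phi_integrand_def[symmetric] integral_unique)
qed

lemma Phi_add_2pi: "Phi (t + 2 * pi) = Phi t + 8 * sqrt 2"
proof -
  have "\<forall>x. ((\<lambda>t. Phi (t + 2 * pi) - Phi t) has_real_derivative 0) (at x)"
  proof
    fix x
    have "((\<lambda>t. Phi (t + 2 * pi) - Phi t) has_real_derivative
        Phi_integrand (x + 2 * pi) * 1 - Phi_integrand x) (at x)"
      by (intro derivative_intros DERIV_chain2[OF has_real_derivative_Phi] has_real_derivative_Phi)
        (auto intro!: derivative_eq_intros)
    then show "((\<lambda>t. Phi (t + 2 * pi) - Phi t) has_real_derivative 0) (at x)"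
      by (simp add: Phi_integrand_def)
  qed
  from DERIV_isconst_all[OF this, of t 0] show ?thesis
    using Phi_eq_cos_half[of "2 * pi"] by (simp add: Phi_def)
qed

lemma Phi_add_2pi_mult: "Phi (t + 2 * pi * of_int k) = Phi t + 8 * sqrt 2 * of_int k"
proof (induction k rule: int_induct[where k = 0])
  case (step1 k)
  then show ?case
    using Phi_add_2pi[of "t + 2 * pi * of_int k"] by (simp add: algebra_simps)
next
  case (step2 k)
  then show ?case
    using Phi_add_2pi[of "t + 2 * pi * of_int (k - 1)"] by (simp add: algebra_simps)
qed simp

definition Phi_defect :: "real \<Rightarrow> real" where
  "Phi_defect t = 2 * pi / (8 * sqrt 2) * Phi t - t"

lemma Phi_defect_of_int_mult_pi: "Phi_defect (of_int k * pi) = 0"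
proof -
  have "Phi (of_int k * pi) = 4 * sqrt 2 * of_int k"
  proof (cases "even k")
    case True
    then obtain m where "k = 2 * m" by blast
    then show ?thesis
      using Phi_add_2pi_mult[of 0 m] by (simp add: Phi_def algebra_simps)
  next
    case False
    then obtain m where "k = 2 * m + 1" by (metis oddE)
    then show ?thesis
      using Phi_add_2pi_mult[of pi m] Phi_eq_cos_half[of pi] by (simp add: algebra_simps)
  qed
  then show ?thesis
    by (simp add: Phi_defect_def field_simps)
qed

lemma Phi_defect_lipschitz: "\<bar>Phi_defect a - Phi_defect b\<bar> \<le> \<bar>a - b\<bar>"
proof -
  define c where "c = 2 * pi / (8 * sqrt 2)"
  have "(Phi_defect has_field_derivative c * Phi_integrand t - 1) (at t within UNIV)" for t
    unfolding Phi_defect_def c_def by (intro DERIV_diff DERIV_cmult has_real_derivative_Phi DERIV_ident)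
  moreover have "norm (c * Phi_integrand t - 1) \<le> 1" for t
  proof -
    have "Phi_integrand t \<le> 2 * sqrt 2"
      unfolding Phi_integrand_def by (simp add: real_sqrt_le_mono)
    moreover have "c * (2 * sqrt 2) = pi / 2"
      by (simp add: c_def field_simps)
    ultimately have "c * Phi_integrand t \<le> pi / 2"
      using mult_left_mono[of "Phi_integrand t" "2 * sqrt 2" c] by (simp add: c_def)
    moreover have "0 \<le> c * Phi_integrand t"
      by (simp add: c_def Phi_integrand_def)
    ultimately show ?thesis
      using pi_half_less_two by simp
  qed
  ultimately show ?thesis
    using field_differentiable_bound[of UNIV Phi_defect "\<lambda>t. c * Phi_integrand t - 1" 1 a b] by simp
qed

lemma le_3_sin:
  assumes "0 \<le> s" "s \<le> pi / 2"
  shows "s \<le> 3 * sin s"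
proof (cases "s \<le> pi / 3")
  case True
  have "(\<lambda>x. sin x - x / 2) 0 \<le> (\<lambda>x. sin x - x / 2) s"
  proof (rule DERIV_nonneg_imp_nondecreasing[OF assms(1)])
    fix x assume x: "0 \<le> x" "x \<le> s"
    have "cos (pi / 3) \<le> cos x"
      using x True by (intro cos_monotone_0_pi_le) auto
    then show "\<exists>y. ((\<lambda>x. sin x - x / 2) has_real_derivative y) (at x) \<and> 0 \<le> y"
      by (intro exI[of _ "cos x - 1 / 2"]) (auto intro!: derivative_eq_intros simp: cos_60)
  qed
  then show ?thesis
    using assms by simp
next
  case False
  have "sin (pi / 3) \<le> sin s"
    using False assms by (intro sin_monotone_2pi_le) auto
  moreover have "4 / 3 \<le> sqrt 3"
    by (rule real_le_rsqrt) (simp add: power2_eq_square)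
  ultimately show ?thesis
    using assms pi_half_less_two by (simp add: sin_60)
qed

lemma abs_Phi_defect_le: "\<bar>Phi_defect t\<bar> \<le> 3 * \<bar>sin t\<bar>"
proof -
  define k where "k = \<lfloor>t / pi + 1 / 2\<rfloor>"
  define s where "s = t - of_int k * pi"
  have "of_int k \<le> t / pi + 1 / 2" "t / pi + 1 / 2 < of_int k + 1"
    unfolding k_def by linarith+
  then have "of_int k * pi \<le> (t / pi + 1 / 2) * pi" "(t / pi + 1 / 2) * pi \<le> (of_int k + 1) * pi"
    by (simp_all add: mult_right_mono)
  then have s: "\<bar>s\<bar> \<le> pi / 2"
    unfolding s_def abs_le_iff by (simp add: algebra_simps)
  have "t = s + pi * of_int k"
    unfolding s_def by simp
  then have "\<bar>sin t\<bar> = \<bar>sin s\<bar>"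
    by (simp add: sin_add)
  moreover have "\<bar>s\<bar> \<le> 3 * \<bar>sin s\<bar>"
    using le_3_sin[of "\<bar>s\<bar>"] s by (cases "0 \<le> s") auto
  moreover have "\<bar>Phi_defect t\<bar> \<le> \<bar>s\<bar>"
    using Phi_defect_lipschitz[of t "of_int k * pi"] by (simp add: Phi_defect_of_int_mult_pi s_def)
  ultimately show ?thesis
    by simp
qed

lemma abs_Phi_defect_le_one_minus_cos:
  fixes \<sigma> \<delta> t :: real
  assumes "\<bar>\<sigma>\<bar> = 1" "0 < \<delta>"
  shows "\<bar>Phi_defect t\<bar> \<le> 3 * ((1 - \<sigma> * cos t) / \<delta> + \<delta> / 2)"
proof -
  have "\<sigma> * \<sigma> = 1"
    using assms(1) abs_mult_self_eq[of \<sigma>] by simp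
  moreover have "(1 - \<sigma> * cos t) * (1 + \<sigma> * cos t) = 1 - (\<sigma> * \<sigma>) * (cos t)\<^sup>2"
    by (simp add: algebra_simps power2_eq_square)
  ultimately have "(sin t)\<^sup>2 = (1 - \<sigma> * cos t) * (1 + \<sigma> * cos t)"
    by (simp add: sin_squared_eq)
  also have "\<dots> \<le> (1 - \<sigma> * cos t) * 2"
  proof (rule mult_left_mono)
    have "\<bar>\<sigma> * cos t\<bar> \<le> 1"
      using assms(1) by (simp add: abs_mult)
    then show "1 + \<sigma> * cos t \<le> 2" "0 \<le> 1 - \<sigma> * cos t"
      by auto
  qed
  finally have sin2: "(sin t)\<^sup>2 / 2 \<le> 1 - \<sigma> * cos t"
    by simp
  have "2 * \<delta> * \<bar>sin t\<bar> \<le> (sin t)\<^sup>2 + \<delta>\<^sup>2"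
    using sum_squares_ge_zero[of "\<bar>sin t\<bar> - \<delta>" 0]
    by (simp add: power2_eq_square algebra_simps)
  then have "\<bar>sin t\<bar> \<le> (sin t)\<^sup>2 / 2 / \<delta> + \<delta> / 2"
    using assms(2) by (simp add: field_simps power2_eq_square)
  also have "\<dots> \<le> (1 - \<sigma> * cos t) / \<delta> + \<delta> / 2"
    using sin2 assms(2) by (intro add_right_mono divide_right_mono) auto
  finally have "\<bar>sin t\<bar> \<le> (1 - \<sigma> * cos t) / \<delta> + \<delta> / 2"
    by simp
  then have "3 * \<bar>sin t\<bar> \<le> 3 * ((1 - \<sigma> * cos t) / \<delta> + \<delta> / 2)"
    by (rule mult_left_mono) simp
  with abs_Phi_defect_le[of t] show ?thesis
    by (rule order_trans)
qed

section \<open>Lipschitz functions against derivatives\<close>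

lemma W11_deriv_continuous_on:
  fixes f :: "real \<Rightarrow> 'a::euclidean_space"
  assumes "W11_deriv a b f g"
  shows "continuous_on {a..b} f"
proof -
  have "g integrable_on {a..b}"
    using assms unfolding W11_deriv_def by (blast intro: set_lebesgue_integral_eq_integral(1))
  then have "continuous_on {a..b} (\<lambda>x. f a + integral {a..x} g)"
    by (intro continuous_intros indefinite_integral_continuous_1)
  moreover have "f a + integral {a..x} g = f x" if "x \<in> {a..b}" for x
  proof -
    have "(g has_integral f x - f a) {a..x}"
      using assms that unfolding W11_deriv_def by blast
    then show ?thesis
      by (simp add: integral_unique)
  qed
  ultimately show ?thesis
    by (rule continuous_on_eq)
qed

lemma W11_deriv_diff:
  assumes "W11_deriv a b f g" "W11_deriv a b f' g'"
  shows "W11_deriv a b (\<lambda>x. f x - f' x) (\<lambda>x. g x - g' x)"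
  unfolding W11_deriv_def
proof (intro conjI ballI)
  show "(\<lambda>x. g x - g' x) absolutely_integrable_on {a..b}"
    using assms unfolding W11_deriv_def by (blast intro: set_integral_diff(1))
  fix x assume "x \<in> {a..b}"
  then have "((\<lambda>x. g x - g' x) has_integral (f x - f a) - (f' x - f' a)) {a..x}"
    using assms unfolding W11_deriv_def by (blast intro: has_integral_diff)
  then show "((\<lambda>x. g x - g' x) has_integral (f x - f' x) - (f a - f' a)) {a..x}"
    by (simp add: algebra_simps)
qed

lemma W11_deriv_scaleR:
  assumes "W11_deriv a b f g"
  shows "W11_deriv a b (\<lambda>x. c *\<^sub>R f x) (\<lambda>x. c *\<^sub>R g x)"
  unfolding W11_deriv_def
proof (intro conjI ballI)
  show "(\<lambda>x. c *\<^sub>R g x) absolutely_integrable_on {a..b}"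
    using assms unfolding W11_deriv_def by blast
  fix x assume "x \<in> {a..b}"
  then have "((\<lambda>x. c *\<^sub>R g x) has_integral c *\<^sub>R (f x - f a)) {a..x}"
    using assms unfolding W11_deriv_def by (blast intro: has_integral_cmul)
  then show "((\<lambda>x. c *\<^sub>R g x) has_integral c *\<^sub>R f x - c *\<^sub>R f a) {a..x}"
    by (simp add: scaleR_diff_right)
qed

lemma W11_deriv_integral:
  fixes f g :: "real \<Rightarrow> 'a::euclidean_space"
  assumes "W11_deriv a b f g" "a \<le> s" "s \<le> t" "t \<le> b"
  shows "integral {s..t} g = f t - f s"
proof -
  have "g integrable_on {a..b}"
    using assms(1) unfolding W11_deriv_def by (blast intro: set_lebesgue_integral_eq_integral(1))
  then have "integral {a..s} g + integral {s..t} g = integral {a..t} g"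
    using assms by (intro Henstock_Kurzweil_Integration.integral_combine integrable_on_subinterval) auto
  moreover have "integral {a..x} g = f x - f a" if "x \<in> {a..b}" for x
    using assms(1) that unfolding W11_deriv_def by (blast intro: integral_unique)
  ultimately show ?thesis
    using assms by (simp add: algebra_simps)
qed

lemma absolutely_integrable_continuous_mult:
  fixes \<phi> f :: "real \<Rightarrow> real"
  assumes "continuous_on {a..b} \<phi>" "f absolutely_integrable_on {a..b}"
  shows "(\<lambda>x. \<phi> x * f x) absolutely_integrable_on {a..b}"
proof (rule absolutely_integrable_bounded_measurable_product_real[OF _ _ _ assms(2)])
  show "\<phi> \<in> borel_measurable (lebesgue_on {a..b})"
    using assms(1) by (rule continuous_imp_measurable_on_sets_lebesgue) simp
  show "bounded (\<phi> ` {a..b})"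
    using assms(1) by (intro compact_imp_bounded compact_continuous_image) auto
qed simp

lemma integral_sum_incseq_partition:
  fixes f :: "real \<Rightarrow> 'a::banach"
  assumes "incseq x" "f integrable_on {x 0..x n}"
  shows "(\<Sum>i<n. integral {x i..x (Suc i)} f) = integral {x 0..x n} f"
  using assms(2)
proof (induction n)
  case (Suc n)
  have "x 0 \<le> x n" "x n \<le> x (Suc n)"
    using assms(1) by (auto simp: incseq_def)
  moreover have "f integrable_on {x 0..x n}"
    using Suc.prems by (rule integrable_on_subinterval) (use calculation in auto)
  ultimately show ?case
    using Suc by (simp add: Henstock_Kurzweil_Integration.integral_combine)
qed simp

lemma summation_by_parts:
  fixes a b :: "nat \<Rightarrow> 'a::comm_ring"
  shows "(\<Sum>i<n. a i * (b (Suc i) - b i)) =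
    a n * b n - a 0 * b 0 - (\<Sum>i<n. (a (Suc i) - a i) * b (Suc i))"
  by (induction n) (simp_all add: algebra_simps)

lemma integral_mult_le_lipschitz_cell:
  fixes \<phi> f :: "real \<Rightarrow> real"
  assumes lip: "K-lipschitz_on {a..b} \<phi>" and f: "f absolutely_integrable_on {a..b}"
    and \<phi>f: "(\<lambda>t. \<phi> t * f t) integrable_on {a..b}"
  shows "integral {a..b} (\<lambda>t. \<phi> t * f t)
    \<le> \<phi> a * integral {a..b} f + K * (b - a) * integral {a..b} (\<lambda>t. \<bar>f t\<bar>)"
proof -
  have fi: "f integrable_on {a..b}" and afi: "(\<lambda>t. \<bar>f t\<bar>) integrable_on {a..b}"
    using f by (auto simp: absolutely_integrable_on_def)
  have "integral {a..b} (\<lambda>t. \<phi> t * f t - \<phi> a * f t) \<le> integral {a..b} (\<lambda>t. K * (b - a) * \<bar>f t\<bar>)"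
  proof (rule integral_le)
    fix t assume t: "t \<in> {a..b}"
    then have "\<bar>\<phi> t - \<phi> a\<bar> \<le> K * \<bar>t - a\<bar>"
      using lipschitz_onD[OF lip t, of a] by (simp add: dist_real_def)
    also have "\<dots> \<le> K * (b - a)"
      using t lipschitz_on_nonneg[OF lip] by (intro mult_left_mono) auto
    finally have "\<bar>\<phi> t - \<phi> a\<bar> * \<bar>f t\<bar> \<le> K * (b - a) * \<bar>f t\<bar>"
      by (rule mult_right_mono) simp
    then show "\<phi> t * f t - \<phi> a * f t \<le> K * (b - a) * \<bar>f t\<bar>"
      by (metis abs_ge_self abs_mult left_diff_distrib order_trans)
  qed (use \<phi>f fi afi in \<open>auto intro: integrable_diff integrable_on_mult_right\<close>)
  moreover have "integral {a..b} (\<lambda>t. \<phi> t * f t - \<phi> a * f t)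
      = integral {a..b} (\<lambda>t. \<phi> t * f t) - \<phi> a * integral {a..b} f"
    using Henstock_Kurzweil_Integration.integral_diff[OF \<phi>f integrable_on_mult_right[OF fi, of "\<phi> a"]]
    by simp
  ultimately show ?thesis
    by simp
qed

lemma uniform_grid:
  fixes L :: real and n :: nat
  assumes "0 \<le> L" "0 < n"
  defines "x \<equiv> \<lambda>i. real i * L / n"
  shows "incseq x" "x 0 = 0" "x n = L" "x (Suc i) = x i + L / n"
    and "i < n \<Longrightarrow> {x i..x (Suc i)} \<subseteq> {0..L}"
proof -
  show x: "incseq x" "x 0 = 0" "x n = L" "x (Suc i) = x i + L / n"
    unfolding incseq_def x_def using assms
    by (auto intro!: divide_right_mono mult_right_mono simp: add_divide_distrib distrib_right)
  show "i < n \<Longrightarrow> {x i..x (Suc i)} \<subseteq> {0..L}"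
    using x(1,2,3) by (auto dest: incseqD[of x 0 i] incseqD[of x "Suc i" n])
qed

text \<open>
  A Lipschitz test function need not be differentiable, so instead of integrating by parts we sum
  by parts on uniform grids and let the mesh tend to zero.
\<close>

lemma integral_mult_le_grid_sum:
  fixes \<phi> f H :: "real \<Rightarrow> real" and L :: real and n :: nat
  assumes lip: "K-lipschitz_on {0..L} \<phi>" and H: "W11_deriv 0 L H f" "H 0 = 0" "H L = 0"
    and \<phi>f: "(\<lambda>x. \<phi> x * f x) integrable_on {0..L}" and "0 \<le> L" "0 < n"
  shows "integral {0..L} (\<lambda>x. \<phi> x * f x)
    \<le> K * (L / n * (\<Sum>i<n. \<bar>H (real (Suc i) * L / n)\<bar>)) + K * (L / n) * integral {0..L} (\<lambda>x. \<bar>f x\<bar>)"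
proof -
  define h where "h = L / n"
  define x where "x i = real i * L / n" for i
  have h: "0 \<le> h"
    unfolding h_def using assms by simp
  note x = uniform_grid[OF \<open>0 \<le> L\<close> \<open>0 < n\<close>, folded x_def h_def]
  have f: "f absolutely_integrable_on {0..L}"
    using H(1) unfolding W11_deriv_def by blast
  then have af: "(\<lambda>x. \<bar>f x\<bar>) integrable_on {0..L}"
    by (simp add: absolutely_integrable_on_def)
  have "integral {0..L} (\<lambda>x. \<phi> x * f x) = (\<Sum>i<n. integral {x i..x (Suc i)} (\<lambda>t. \<phi> t * f t))"
    using integral_sum_incseq_partition[of x "\<lambda>t. \<phi> t * f t" n] x \<phi>f by simp
  also have "\<dots> \<le> (\<Sum>i<n. \<phi> (x i) * (H (x (Suc i)) - H (x i))
      + K * h * integral {x i..x (Suc i)} (\<lambda>t. \<bar>f t\<bar>))"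
  proof (rule sum_mono)
    fix i assume "i \<in> {..<n}"
    then have i: "{x i..x (Suc i)} \<subseteq> {0..L}"
      by (intro x(5)) simp
    then have "integral {x i..x (Suc i)} f = H (x (Suc i)) - H (x i)"
      using x(4)[of i] h by (intro W11_deriv_integral[OF H(1)]) auto
    moreover have "integral {x i..x (Suc i)} (\<lambda>t. \<phi> t * f t)
        \<le> \<phi> (x i) * integral {x i..x (Suc i)} f + K * (x (Suc i) - x i) * integral {x i..x (Suc i)} (\<lambda>t. \<bar>f t\<bar>)"
      using i by (intro integral_mult_le_lipschitz_cell lipschitz_on_subset[OF lip]
          absolutely_integrable_on_subinterval[OF f] integrable_on_subinterval[OF \<phi>f])
    ultimately show "integral {x i..x (Suc i)} (\<lambda>t. \<phi> t * f t) \<le> \<phi> (x i) * (H (x (Suc i)) - H (x i))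
        + K * h * integral {x i..x (Suc i)} (\<lambda>t. \<bar>f t\<bar>)"
      by (simp add: x(4))
  qed
  also have "\<dots> = K * h * integral {0..L} (\<lambda>x. \<bar>f x\<bar>) - (\<Sum>i<n. (\<phi> (x (Suc i)) - \<phi> (x i)) * H (x (Suc i)))"
    using summation_by_parts[of "\<lambda>i. \<phi> (x i)" "\<lambda>i. H (x i)" n]
      integral_sum_incseq_partition[of x "\<lambda>t. \<bar>f t\<bar>" n] x af H(2,3)
    by (simp add: sum.distrib flip: sum_distrib_left)
  also have "\<dots> \<le> K * h * integral {0..L} (\<lambda>x. \<bar>f x\<bar>) + (\<Sum>i<n. K * h * \<bar>H (x (Suc i))\<bar>)"
  proof -
    have "- ((\<phi> (x (Suc i)) - \<phi> (x i)) * H (x (Suc i))) \<le> K * h * \<bar>H (x (Suc i))\<bar>" if "i < n" for i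
    proof -
      have "\<bar>\<phi> (x (Suc i)) - \<phi> (x i)\<bar> \<le> K * h"
        using lipschitz_onD[OF lip, of "x (Suc i)" "x i"] x(5)[OF that] x(4)[of i] h
        by (simp add: dist_real_def)
      then have "\<bar>\<phi> (x (Suc i)) - \<phi> (x i)\<bar> * \<bar>H (x (Suc i))\<bar> \<le> K * h * \<bar>H (x (Suc i))\<bar>"
        by (rule mult_right_mono) simp
      then show ?thesis
        by (metis abs_ge_minus_self abs_mult order_trans)
    qed
    then show ?thesis
      using sum_mono[of "{..<n}" "\<lambda>i. - ((\<phi> (x (Suc i)) - \<phi> (x i)) * H (x (Suc i)))"]
      by (simp add: sum_negf)
  qed
  finally show ?thesis
    by (simp add: x_def h_def sum_distrib_left algebra_simps)
qed

lemma Riemann_sum_error_le: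
  fixes g :: "real \<Rightarrow> real" and L :: real and n :: nat
  assumes g: "continuous_on {0..L} g" and "0 \<le> L" "0 < n"
    and osc: "\<And>s t. s \<in> {0..L} \<Longrightarrow> t \<in> {0..L} \<Longrightarrow> \<bar>t - s\<bar> \<le> L / n \<Longrightarrow> \<bar>g t - g s\<bar> \<le> \<eta>"
  shows "\<bar>L / n * (\<Sum>i<n. g (real (Suc i) * L / n)) - integral {0..L} g\<bar> \<le> L * \<eta>"
proof -
  define h where "h = L / n"
  define x where "x i = real i * L / n" for i
  note x = uniform_grid[OF \<open>0 \<le> L\<close> \<open>0 < n\<close>, folded x_def h_def]
  have "L / n * (\<Sum>i<n. g (x (Suc i))) - integral {0..L} g
      = (\<Sum>i<n. integral {x i..x (Suc i)} (\<lambda>t. g (x (Suc i)) - g t))"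
  proof -
    have "integral {x i..x (Suc i)} (\<lambda>t. g (x (Suc i)) - g t)
        = h * g (x (Suc i)) - integral {x i..x (Suc i)} g" if "i < n" for i
      using x(4)[of i] x(5)[OF that] assms(2,3)
      by (simp add: Henstock_Kurzweil_Integration.integral_diff h_def
          integrable_continuous_interval continuous_on_subset[OF g])
    then show ?thesis
      using integral_sum_incseq_partition[of x g n] x(1,2,3) integrable_continuous_interval[OF g]
      by (simp add: sum_subtractf sum_distrib_left h_def)
  qed
  also have "\<bar>\<dots>\<bar> \<le> (\<Sum>i<n. \<eta> * h)"
  proof (intro order_trans[OF sum_abs sum_mono])
    fix i assume "i \<in> {..<n}"
    then have i: "{x i..x (Suc i)} \<subseteq> {0..L}"
      by (intro x(5)) simp
    have "norm (g (x (Suc i)) - g t) \<le> \<eta>" if "t \<in> {x i..x (Suc i)}" for t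
      using osc[of t "x (Suc i)"] x(4)[of i] i that by (auto simp: h_def)
    moreover have "x i \<le> x (Suc i)"
      using x(1) by (simp add: incseq_SucD)
    ultimately have "norm (integral {x i..x (Suc i)} (\<lambda>t. g (x (Suc i)) - g t)) \<le> \<eta> * (x (Suc i) - x i)"
      using i by (intro integral_bound continuous_intros continuous_on_subset[OF g]) auto
    then show "\<bar>integral {x i..x (Suc i)} (\<lambda>t. g (x (Suc i)) - g t)\<bar> \<le> \<eta> * h"
      using x(4)[of i] by simp
  qed
  also have "\<dots> = L * \<eta>"
    using \<open>0 < n\<close> by (simp add: h_def)
  finally show ?thesis
    by (simp add: x_def)
qed

lemma Riemann_sum_tendsto_integral:
  fixes g :: "real \<Rightarrow> real" and L :: real
  assumes g: "continuous_on {0..L} g" and "0 \<le> L"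
  shows "(\<lambda>n. L / n * (\<Sum>i<n. g (real (Suc i) * L / n))) \<longlonglongrightarrow> integral {0..L} g"
proof (rule LIMSEQ_I)
  fix e :: real assume "0 < e"
  define \<eta> where "\<eta> = e / (L + 1)"
  have \<eta>: "0 < \<eta>" "L * \<eta> < e"
    using \<open>0 < e\<close> \<open>0 \<le> L\<close> by (auto simp: \<eta>_def field_simps)
  obtain d where d: "0 < d"
    and gd: "\<And>s t. s \<in> {0..L} \<Longrightarrow> t \<in> {0..L} \<Longrightarrow> dist t s < d \<Longrightarrow> dist (g t) (g s) < \<eta>"
    using compact_uniformly_continuous[OF g compact_Icc] \<eta>(1) unfolding uniformly_continuous_on_def by metis
  obtain N :: nat where N: "L / d < N"
    using reals_Archimedean2 by blast
  show "\<exists>N. \<forall>n\<ge>N. norm (L / n * (\<Sum>i<n. g (real (Suc i) * L / n)) - integral {0..L} g) < e"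
  proof (intro exI[of _ N] allI impI)
    fix n assume "N \<le> n"
    then have "L / d < n"
      using N by linarith
    moreover from this have "0 < n"
      using d \<open>0 \<le> L\<close> by (metis divide_nonneg_pos le_less_trans of_nat_0_less_iff)
    ultimately have "L / n < d"
      using d by (simp add: pos_divide_less_eq mult.commute)
    then have "\<bar>L / n * (\<Sum>i<n. g (real (Suc i) * L / n)) - integral {0..L} g\<bar> \<le> L * \<eta>"
      using gd \<open>0 < n\<close> by (intro Riemann_sum_error_le g \<open>0 \<le> L\<close> less_imp_le) (auto simp: dist_real_def)
    then show "norm (L / n * (\<Sum>i<n. g (real (Suc i) * L / n)) - integral {0..L} g) < e"
      using \<eta>(2) by simp
  qed
qed

lemma integral_mult_le_lipschitz_primitive:
  fixes \<phi> f H :: "real \<Rightarrow> real"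
  assumes lip: "K-lipschitz_on {0..L} \<phi>" and H: "W11_deriv 0 L H f" "H 0 = 0" "H L = 0"
    and \<phi>f: "(\<lambda>x. \<phi> x * f x) integrable_on {0..L}" and "0 \<le> L"
  shows "integral {0..L} (\<lambda>x. \<phi> x * f x) \<le> K * integral {0..L} (\<lambda>x. \<bar>H x\<bar>)"
proof (rule LIMSEQ_le_const)
  have "continuous_on {0..L} (\<lambda>x. \<bar>H x\<bar>)"
    using W11_deriv_continuous_on[OF H(1)] by (intro continuous_intros)
  then have "(\<lambda>n. L / n * (\<Sum>i<n. \<bar>H (real (Suc i) * L / n)\<bar>)) \<longlonglongrightarrow> integral {0..L} (\<lambda>x. \<bar>H x\<bar>)"
    using \<open>0 \<le> L\<close> by (rule Riemann_sum_tendsto_integral)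
  then have "(\<lambda>n. K * (L / n * (\<Sum>i<n. \<bar>H (real (Suc i) * L / n)\<bar>)) + K * (L / n) * integral {0..L} (\<lambda>x. \<bar>f x\<bar>))
      \<longlonglongrightarrow> K * integral {0..L} (\<lambda>x. \<bar>H x\<bar>) + K * 0 * integral {0..L} (\<lambda>x. \<bar>f x\<bar>)"
    by (intro tendsto_intros)
  then show "(\<lambda>n. K * (L / n * (\<Sum>i<n. \<bar>H (real (Suc i) * L / n)\<bar>)) + K * (L / n) * integral {0..L} (\<lambda>x. \<bar>f x\<bar>))
      \<longlonglongrightarrow> K * integral {0..L} (\<lambda>x. \<bar>H x\<bar>)"
    by simp
  show "\<exists>N. \<forall>n\<ge>N. integral {0..L} (\<lambda>x. \<phi> x * f x) \<le> K * (L / n * (\<Sum>i<n. \<bar>H (real (Suc i) * L / n)\<bar>))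
      + K * (L / n) * integral {0..L} (\<lambda>x. \<bar>f x\<bar>)"
    using integral_mult_le_grid_sum[OF assms] by (intro exI[of _ 1]) auto
qed

section \<open>The flat norm\<close>

lemma flat_test_zero: "flat_test L (\<lambda>_. 0)"
  unfolding flat_test_def by (intro exI[of _ 0]) auto

lemma flat_test_lipschitz:
  assumes "flat_test L \<phi>"
  shows "1-lipschitz_on {0..L} \<phi>"
proof (rule lipschitz_onI)
  obtain M K where M: "\<forall>x\<in>{0..L}. \<bar>\<phi> x\<bar> \<le> M"
    and K: "\<forall>x\<in>{0..L}. \<forall>y\<in>{0..L}. \<bar>\<phi> x - \<phi> y\<bar> \<le> K * \<bar>x - y\<bar>" and MK: "M + K \<le> 1"
    using assms unfolding flat_test_def by blast
  fix x y assume xy: "x \<in> {0..L}" "y \<in> {0..L}"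
  then have "0 \<le> M"
    using M by (meson abs_ge_zero order_trans)
  then have "K \<le> 1"
    using MK by linarith
  then have "K * \<bar>x - y\<bar> \<le> 1 * \<bar>x - y\<bar>"
    by (rule mult_right_mono) simp
  then show "dist (\<phi> x) (\<phi> y) \<le> 1 * dist x y"
    using K xy by (force simp: dist_real_def)
qed simp

lemma flat_test_abs_le_1:
  assumes "flat_test L \<phi>" "0 < L" "x \<in> {0..L}"
  shows "\<bar>\<phi> x\<bar> \<le> 1"
proof -
  obtain M K where M: "\<forall>x\<in>{0..L}. \<bar>\<phi> x\<bar> \<le> M"
    and K: "\<forall>x\<in>{0..L}. \<forall>y\<in>{0..L}. \<bar>\<phi> x - \<phi> y\<bar> \<le> K * \<bar>x - y\<bar>" and MK: "M + K \<le> 1"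
    using assms(1) unfolding flat_test_def by blast
  have "0 \<le> K * L"
    using K[rule_format, of 0 L] assms(2) by (simp add: order_trans[OF abs_ge_zero])
  then have "0 \<le> K"
    using assms(2) by (simp add: zero_le_mult_iff)
  then show ?thesis
    using M MK assms(3) by force
qed

lemma flat_norm_ge:
  assumes "\<And>\<psi>. flat_test L \<psi> \<Longrightarrow> T \<psi> \<le> B" "flat_test L \<phi>"
  shows "T \<phi> \<le> flat_norm L T"
  unfolding flat_norm_def by (rule cSup_upper) (use assms in \<open>auto intro!: bdd_aboveI\<close>)

lemma flat_norm_le:
  assumes "\<And>\<phi>. flat_test L \<phi> \<Longrightarrow> T \<phi> \<le> B"
  shows "flat_norm L T \<le> B"
  unfolding flat_norm_def using assms flat_test_zero by (intro cSup_least) auto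

lemma flat_norm_nonneg:
  assumes "\<And>\<phi>. flat_test L \<phi> \<Longrightarrow> T \<phi> \<le> B" "T (\<lambda>_. 0) = 0"
  shows "0 \<le> flat_norm L T"
  using flat_norm_ge[of L T B "\<lambda>_. 0"] assms flat_test_zero by simp

lemma flat_test_mult_absolutely_integrable:
  assumes "flat_test L \<phi>" "f absolutely_integrable_on {0..L}"
  shows "(\<lambda>x. \<phi> x * f x) absolutely_integrable_on {0..L}"
  using lipschitz_on_continuous_on[OF flat_test_lipschitz[OF assms(1)]] assms(2)
  by (rule absolutely_integrable_continuous_mult)

lemma abs_dens_le:
  assumes "flat_test L \<phi>" "0 < L" "f absolutely_integrable_on {0..L}"
  shows "\<bar>dens L f \<phi>\<bar> \<le> integral {0..L} (\<lambda>x. \<bar>f x\<bar>)"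
  unfolding dens_def
proof (rule integral_norm_bound_integral[where f = "\<lambda>x. \<phi> x * f x", simplified])
  show "(\<lambda>x. \<phi> x * f x) integrable_on {0..L}" "(\<lambda>x. \<bar>f x\<bar>) integrable_on {0..L}"
    using flat_test_mult_absolutely_integrable[OF assms(1,3)] assms(3)
    by (simp_all add: absolutely_integrable_on_def)
  fix x assume "x \<in> {0..L}"
  then have "\<bar>\<phi> x\<bar> * \<bar>f x\<bar> \<le> 1 * \<bar>f x\<bar>"
    using flat_test_abs_le_1[OF assms(1,2)] by (intro mult_right_mono) auto
  then show "\<bar>\<phi> x * f x\<bar> \<le> \<bar>f x\<bar>"
    by (simp add: abs_mult)
qed

lemma dens_diff:
  assumes "flat_test L \<phi>" "f absolutely_integrable_on {0..L}" "g absolutely_integrable_on {0..L}"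
  shows "dens L (\<lambda>x. f x - g x) \<phi> = dens L f \<phi> - dens L g \<phi>"
  using flat_test_mult_absolutely_integrable[OF assms(1,2)] flat_test_mult_absolutely_integrable[OF assms(1,3)]
  unfolding dens_def
  by (simp add: right_diff_distrib Henstock_Kurzweil_Integration.integral_diff absolutely_integrable_on_def)

lemma dens_cmult: "dens L (\<lambda>x. c * f x) \<phi> = c * dens L f \<phi>"
  unfolding dens_def by (simp add: mult.left_commute)

lemma abs_atoms_le:
  assumes "flat_test L \<phi>" "0 < L" "Mfin_data L N xs"
  shows "\<bar>atoms N c xs \<phi>\<bar> \<le> 2 * pi * (\<Sum>j<N. \<bar>of_int (c j)\<bar>)"
proof -
  have "\<bar>\<Sum>j<N. of_int (c j) * \<phi> (xs j)\<bar> \<le> (\<Sum>j<N. \<bar>of_int (c j)\<bar>)"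
  proof (rule order_trans[OF sum_abs sum_mono])
    fix j assume "j \<in> {..<N}"
    then have "\<bar>\<phi> (xs j)\<bar> \<le> 1"
      using assms by (intro flat_test_abs_le_1) (auto simp: Mfin_data_def)
    then show "\<bar>of_int (c j) * \<phi> (xs j)\<bar> \<le> \<bar>of_int (c j)\<bar>"
      by (simp add: abs_mult mult_left_le)
  qed
  then show ?thesis
    unfolding atoms_def by (simp add: abs_mult)
qed

lemma flat_norm_dens_le_primitive:
  assumes "W11_deriv 0 L H f" "H 0 = 0" "H L = 0" "0 < L"
  shows "flat_norm L (dens L f) \<le> integral {0..L} (\<lambda>x. \<bar>H x\<bar>)"
proof (rule flat_norm_le)
  fix \<phi> assume \<phi>: "flat_test L \<phi>"
  have "f absolutely_integrable_on {0..L}"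
    using assms(1) unfolding W11_deriv_def by blast
  then have "(\<lambda>x. \<phi> x * f x) integrable_on {0..L}"
    using flat_test_mult_absolutely_integrable[OF \<phi>] by (simp add: absolutely_integrable_on_def)
  then show "dens L f \<phi> \<le> integral {0..L} (\<lambda>x. \<bar>H x\<bar>)"
    unfolding dens_def
    using integral_mult_le_lipschitz_primitive[OF flat_test_lipschitz[OF \<phi>] assms(1-3)] assms(4) by simp
qed

lemma flat_norm_dens_nonneg:
  assumes "0 < L" "f absolutely_integrable_on {0..L}"
  shows "0 \<le> flat_norm L (dens L f)"
  using abs_dens_le[OF _ assms] by (intro flat_norm_nonneg[where B = "integral {0..L} (\<lambda>x. \<bar>f x\<bar>)"])
    (auto simp: dens_def abs_le_iff)

lemma flat_norm_dens_minus_atoms_le: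
  assumes L: "0 < L" and xs: "Mfin_data L N xs"
    and f: "f absolutely_integrable_on {0..L}" and g: "g absolutely_integrable_on {0..L}"
    and r: "0 < r" "r \<le> 1"
  shows "flat_norm L (\<lambda>\<phi>. dens L f \<phi> - atoms N c xs \<phi>)
    \<le> flat_norm L (dens L (\<lambda>x. f x - g x))
      + flat_norm L (\<lambda>\<phi>. dens L (\<lambda>x. r * g x) \<phi> - atoms N c xs \<phi>) / r
      + (1 / r - 1) * (2 * pi * (\<Sum>j<N. \<bar>of_int (c j)\<bar>))"
proof (rule flat_norm_le)
  define m where "m = 2 * pi * (\<Sum>j<N. \<bar>(of_int (c j) :: real)\<bar>)"
  have fg: "(\<lambda>x. f x - g x) absolutely_integrable_on {0..L}"
    using f g by (rule set_integral_diff(1))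
  have rg: "(\<lambda>x. r * g x) absolutely_integrable_on {0..L}"
    using g by (rule set_integrable_mult_right)
  fix \<phi> assume \<phi>: "flat_test L \<phi>"
  have atoms: "\<bar>atoms N c xs \<psi>\<bar> \<le> m" if "flat_test L \<psi>" for \<psi>
    unfolding m_def by (rule abs_atoms_le[OF that L xs])
  have "dens L (\<lambda>x. f x - g x) \<phi> \<le> flat_norm L (dens L (\<lambda>x. f x - g x))"
    using abs_dens_le[OF _ L fg] \<phi>
    by (intro flat_norm_ge[where B = "integral {0..L} (\<lambda>x. \<bar>f x - g x\<bar>)"]) (auto simp: abs_le_iff)
  moreover have "dens L (\<lambda>x. r * g x) \<psi> - atoms N c xs \<psi> \<le> integral {0..L} (\<lambda>x. \<bar>r * g x\<bar>) + m"
    if "flat_test L \<psi>" for \<psi>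
    using abs_dens_le[OF that L rg] atoms[OF that] by linarith
  then have "dens L (\<lambda>x. r * g x) \<phi> - atoms N c xs \<phi>
      \<le> flat_norm L (\<lambda>\<phi>. dens L (\<lambda>x. r * g x) \<phi> - atoms N c xs \<phi>)"
    using \<phi> by (rule flat_norm_ge)
  then have "(dens L (\<lambda>x. r * g x) \<phi> - atoms N c xs \<phi>) / r
      \<le> flat_norm L (\<lambda>\<phi>. dens L (\<lambda>x. r * g x) \<phi> - atoms N c xs \<phi>) / r"
    using r by (simp add: divide_right_mono)
  moreover have "(1 / r - 1) * atoms N c xs \<phi> \<le> (1 / r - 1) * m"
    using atoms[OF \<phi>] r by (intro mult_left_mono) auto
  moreover have "dens L f \<phi> - atoms N c xs \<phi> = dens L (\<lambda>x. f x - g x) \<phi>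
      + (dens L (\<lambda>x. r * g x) \<phi> - atoms N c xs \<phi>) / r + (1 / r - 1) * atoms N c xs \<phi>"
    unfolding dens_diff[OF \<phi> f g] dens_cmult using r by (simp add: field_simps)
  ultimately show "dens L f \<phi> - atoms N c xs \<phi> \<le> flat_norm L (dens L (\<lambda>x. f x - g x))
      + flat_norm L (\<lambda>\<phi>. dens L (\<lambda>x. r * g x) \<phi> - atoms N c xs \<phi>) / r + (1 / r - 1) * m"
    by linarith
qed

lemma flat_norm_dens_minus_atoms_tendsto:
  fixes f g :: "'a \<Rightarrow> real \<Rightarrow> real" and l :: "'a \<Rightarrow> real"
  assumes L: "0 < L" and xs: "Mfin_data L N xs"
    and ev: "\<forall>\<^sub>F i in F. f i absolutely_integrable_on {0..L} \<and> g i absolutely_integrable_on {0..L} \<and> L \<le> l i"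
    and l: "(l \<longlongrightarrow> L) F"
    and fg: "((\<lambda>i. flat_norm L (dens L (\<lambda>x. f i x - g i x))) \<longlongrightarrow> 0) F"
    and approx: "((\<lambda>i. flat_norm L (\<lambda>\<phi>. dens L (\<lambda>x. L / l i * g i x) \<phi> - atoms N c xs \<phi>)) \<longlongrightarrow> 0) F"
  shows "((\<lambda>i. flat_norm L (\<lambda>\<phi>. dens L (f i) \<phi> - atoms N c xs \<phi>)) \<longlongrightarrow> 0) F"
proof (rule tendsto_sandwich[OF _ _ tendsto_const])
  define m where "m = 2 * pi * (\<Sum>j<N. \<bar>(of_int (c j) :: real)\<bar>)"
  show "\<forall>\<^sub>F i in F. 0 \<le> flat_norm L (\<lambda>\<phi>. dens L (f i) \<phi> - atoms N c xs \<phi>)"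
    using ev
  proof eventually_elim
    case (elim i)
    show ?case
    proof (rule flat_norm_nonneg)
      fix \<phi> assume \<phi>: "flat_test L \<phi>"
      show "dens L (f i) \<phi> - atoms N c xs \<phi> \<le> integral {0..L} (\<lambda>x. \<bar>f i x\<bar>) + m"
        using abs_dens_le[OF \<phi> L] abs_atoms_le[OF \<phi> L xs, of c] elim unfolding m_def by fastforce
    qed (simp add: dens_def atoms_def)
  qed
  show "\<forall>\<^sub>F i in F. flat_norm L (\<lambda>\<phi>. dens L (f i) \<phi> - atoms N c xs \<phi>)
      \<le> flat_norm L (dens L (\<lambda>x. f i x - g i x))
        + flat_norm L (\<lambda>\<phi>. dens L (\<lambda>x. L / l i * g i x) \<phi> - atoms N c xs \<phi>) / (L / l i)
        + (1 / (L / l i) - 1) * m"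
    using ev
  proof eventually_elim
    case (elim i)
    then have "0 < L / l i" "L / l i \<le> 1"
      using L by auto
    then show ?case
      unfolding m_def using elim by (intro flat_norm_dens_minus_atoms_le[OF L xs]) auto
  qed
  have "((\<lambda>i. flat_norm L (dens L (\<lambda>x. f i x - g i x))
        + flat_norm L (\<lambda>\<phi>. dens L (\<lambda>x. L / l i * g i x) \<phi> - atoms N c xs \<phi>) / (L / l i)
        + (1 / (L / l i) - 1) * m) \<longlongrightarrow> 0 + 0 / (L / L) + (1 / (L / L) - 1) * m) F"
    using L by (intro tendsto_intros fg approx l) auto
  then show "((\<lambda>i. flat_norm L (dens L (\<lambda>x. f i x - g i x))
        + flat_norm L (\<lambda>\<phi>. dens L (\<lambda>x. L / l i * g i x) \<phi> - atoms N c xs \<phi>) / (L / l i)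
        + (1 / (L / l i) - 1) * m) \<longlongrightarrow> 0) F"
    using L by simp
qed

section \<open>Curves with small length excess\<close>

lemma dist_le_curve_length:
  fixes Y V :: "real \<Rightarrow> real \<times> real"
  assumes "W11_deriv 0 L Y V" "0 \<le> L"
  shows "dist (Y 0) (Y L) \<le> curve_length L V"
proof -
  have "(V has_integral Y L - Y 0) {0..L}" "V absolutely_integrable_on {0..L}"
    using assms unfolding W11_deriv_def by auto
  then have "norm (Y L - Y 0) \<le> integral {0..L} (\<lambda>x. norm (V x))"
    by (metis absolutely_integrable_on_def integral_norm_bound_integral integral_unique order_refl)
  then show ?thesis
    by (simp add: curve_length_def dist_norm norm_minus_commute)
qed

lemma has_integral_one_minus_cos_lift:
  fixes p q :: "real \<times> real" and Y V :: "real \<Rightarrow> real \<times> real" and \<theta> :: "real \<Rightarrow> real"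
  assumes pq: "snd p = 0" "snd q = 0" "p \<noteq> q" and L: "L = dist p q"
    and Y: "W11_deriv 0 L Y V" "Y 0 = p" "Y L = q"
    and lift: "\<And>x. x \<in> {0..L} \<Longrightarrow> V x = (curve_length L V / L) *\<^sub>R (cos (\<theta> x), sin (\<theta> x))"
  shows "((\<lambda>x. 1 - sgn (fst q - fst p) * cos (\<theta> x)) has_integral L - L\<^sup>2 / curve_length L V) {0..L}"
proof -
  define s where "s = curve_length L V / L"
  define D where "D = fst q - fst p"
  have L0: "0 < L"
    using pq L by simp
  have "L \<le> curve_length L V"
    using dist_le_curve_length[OF Y(1)] Y(2,3) L L0 by simp
  then have s: "0 < s"
    using L0 by (simp add: s_def)
  have D: "\<bar>D\<bar> = L"
    using pq L by (simp add: D_def dist_prod_def dist_real_def abs_minus_commute)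
  have "(V has_integral q - p) {0..L}"
    using Y L0 unfolding W11_deriv_def by auto
  from has_integral_linear[OF this bounded_linear_fst]
  have "((\<lambda>x. fst (V x)) has_integral D) {0..L}"
    by (simp add: o_def D_def)
  then have "((\<lambda>x. sgn D / s * fst (V x)) has_integral sgn D / s * D) {0..L}"
    by (rule has_integral_mult_right)
  moreover have "sgn D / s * D = L / s"
    using D abs_sgn[of D] by (simp add: mult.commute)
  ultimately have fst_int: "((\<lambda>x. sgn D / s * fst (V x)) has_integral L / s) {0..L}"
    by metis
  have "sgn D / s * fst (V x) = sgn D * cos (\<theta> x)" if "x \<in> {0..L}" for x
    using lift[OF that, folded s_def] s by simp
  from has_integral_eq[OF this fst_int]
  have "((\<lambda>x. sgn D * cos (\<theta> x)) has_integral L / s) {0..L}" .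
  from has_integral_diff[OF has_integral_const_real[of 1 0 L] this]
  show ?thesis
    using L0 by (simp add: s_def D_def power2_eq_square)
qed

lemma flat_norm_Phi_defect_le:
  fixes p q :: "real \<times> real" and Y V :: "real \<Rightarrow> real \<times> real" and \<theta> d\<theta> dPhi :: "real \<Rightarrow> real"
  assumes pq: "snd p = 0" "snd q = 0" "p \<noteq> q" and L: "L = dist p q"
    and Y: "W11_deriv 0 L Y V" "Y 0 = p" "Y L = q"
    and horiz: "snd (V 0) = 0" "snd (V L) = 0"
    and excess: "curve_length L V - L \<le> E"
    and \<theta>: "W11_deriv 0 L \<theta> d\<theta>"
    and lift: "\<And>x. x \<in> {0..L} \<Longrightarrow> V x = (curve_length L V / L) *\<^sub>R (cos (\<theta> x), sin (\<theta> x))"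
    and Phi\<theta>: "W11_deriv 0 L (\<lambda>x. Phi (\<theta> x)) dPhi" and "0 < \<delta>"
  shows "flat_norm L (dens L (\<lambda>x. 2 * pi / (8 * sqrt 2) * dPhi x - d\<theta> x)) \<le> 3 * (E / \<delta> + L * \<delta> / 2)"
proof -
  define l where "l = curve_length L V"
  define \<sigma> where "\<sigma> = sgn (fst q - fst p)"
  have L0: "0 < L"
    using pq L by simp
  have l: "L \<le> l"
    using dist_le_curve_length[OF Y(1)] Y(2,3) L L0 by (simp add: l_def)
  have "L - L\<^sup>2 / l \<le> E"
  proof -
    have "0 \<le> (l - L)\<^sup>2 / l"
      using l L0 by simp
    also have "\<dots> = (l - L) - (L - L\<^sup>2 / l)"
      using l L0 by (simp add: field_simps power2_eq_square)
    finally show ?thesis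
      using excess by (simp add: l_def)
  qed
  have \<sigma>: "\<bar>\<sigma>\<bar> = 1"
    using pq by (auto simp: \<sigma>_def prod_eq_iff)
  note u = has_integral_one_minus_cos_lift[OF pq L Y lift, folded \<sigma>_def l_def]
  have ends: "Phi_defect (\<theta> x) = 0" if "x = 0 \<or> x = L" for x
  proof -
    have "l / L * sin (\<theta> x) = 0"
      using that horiz lift[of x] L0 by (auto simp: l_def)
    then obtain k :: int where "\<theta> x = of_int k * pi"
      using l L0 sin_zero_iff_int2 by auto
    then show ?thesis
      by (simp add: Phi_defect_of_int_mult_pi)
  qed
  have W: "W11_deriv 0 L (\<lambda>x. Phi_defect (\<theta> x)) (\<lambda>x. 2 * pi / (8 * sqrt 2) * dPhi x - d\<theta> x)"
    using W11_deriv_diff[OF W11_deriv_scaleR[OF Phi\<theta>, of "2 * pi / (8 * sqrt 2)"] \<theta>]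
    unfolding Phi_defect_def by simp
  then have "flat_norm L (dens L (\<lambda>x. 2 * pi / (8 * sqrt 2) * dPhi x - d\<theta> x))
      \<le> integral {0..L} (\<lambda>x. \<bar>Phi_defect (\<theta> x)\<bar>)"
    using ends L0 by (intro flat_norm_dens_le_primitive) auto
  also have "\<dots> \<le> 3 * ((L - L\<^sup>2 / l) / \<delta> + L * \<delta> / 2)"
  proof (rule has_integral_le)
    show "((\<lambda>x. \<bar>Phi_defect (\<theta> x)\<bar>) has_integral integral {0..L} (\<lambda>x. \<bar>Phi_defect (\<theta> x)\<bar>)) {0..L}"
      using W11_deriv_continuous_on[OF W]
      by (intro integrable_integral integrable_continuous_interval continuous_intros)
    show "((\<lambda>x. 3 * ((1 - \<sigma> * cos (\<theta> x)) / \<delta> + \<delta> / 2)) has_integral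
        3 * ((L - L\<^sup>2 / l) / \<delta> + L * \<delta> / 2)) {0..L}"
      using has_integral_mult_right[OF has_integral_add[OF has_integral_divide[OF u, of \<delta>]
          has_integral_const_real[of "\<delta> / 2" 0 L]], of 3] L0 by simp
    show "\<bar>Phi_defect (\<theta> x)\<bar> \<le> 3 * ((1 - \<sigma> * cos (\<theta> x)) / \<delta> + \<delta> / 2)" for x
      using \<sigma> \<open>0 < \<delta>\<close> by (rule abs_Phi_defect_le_one_minus_cos)
  qed
  also have "\<dots> \<le> 3 * (E / \<delta> + L * \<delta> / 2)"
    using \<open>L - L\<^sup>2 / l \<le> E\<close> \<open>0 < \<delta>\<close> by (simp add: divide_right_mono)
  finally show ?thesis .
qed

theorem lemma4p5:
  fixes p q :: "real \<times> real" and L C :: real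
    and Y V A :: "real \<Rightarrow> real \<Rightarrow> real \<times> real"
    and G1 G2 :: "real \<Rightarrow> real \<Rightarrow> real \<times> real"
    and \<theta> d\<theta> dPhi\<theta> :: "real \<Rightarrow> real \<Rightarrow> real"
  assumes pq: "snd p = 0" "snd q = 0" "p \<noteq> q"
    and L_def: "L = dist p q"
    and C_pos: "C > 0"
    and H2: "\<And>\<epsilon>. \<epsilon> \<in> {0<..1} \<Longrightarrow> H2_derivs 0 L (Y \<epsilon>) (V \<epsilon>) (A \<epsilon>)"
    and speed: "\<And>\<epsilon> x. \<epsilon> \<in> {0<..1} \<Longrightarrow> x \<in> {0..L} \<Longrightarrow>
                   norm (V \<epsilon> x) = curve_length L (V \<epsilon>) / L"
    and ends: "\<And>\<epsilon>. \<epsilon> \<in> {0<..1} \<Longrightarrow> Y \<epsilon> 0 = p \<and> Y \<epsilon> L = q"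
    and horiz: "\<And>\<epsilon>. \<epsilon> \<in> {0<..1} \<Longrightarrow> snd (V \<epsilon> 0) = 0 \<and> snd (V \<epsilon> L) = 0"
    and len: "\<And>\<epsilon>. \<epsilon> \<in> {0<..1} \<Longrightarrow> curve_length L (V \<epsilon>) - dist p q \<le> C * sqrt \<epsilon>"
    and gamma: "\<And>\<epsilon>. \<epsilon> \<in> {0<..1} \<Longrightarrow>
                   H2_derivs 0 (curve_length L (V \<epsilon>))
                     (\<lambda>s. Y \<epsilon> (s * L / curve_length L (V \<epsilon>))) (G1 \<epsilon>) (G2 \<epsilon>)"
    and energy: "\<And>\<epsilon>. \<epsilon> \<in> {0<..1} \<Longrightarrow>
                   sqrt \<epsilon> * integral {0..curve_length L (V \<epsilon>)} (\<lambda>s. (norm (G2 \<epsilon> s))\<^sup>2) \<le> C"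
    and lift: "\<And>\<epsilon>. \<epsilon> \<in> {0<..1} \<Longrightarrow> H1_deriv 0 L (\<theta> \<epsilon>) (d\<theta> \<epsilon>)"
    and lift_eq: "\<And>\<epsilon> x. \<epsilon> \<in> {0<..1} \<Longrightarrow> x \<in> {0..L} \<Longrightarrow>
                   V \<epsilon> x = (curve_length L (V \<epsilon>) / L) *\<^sub>R (cos (\<theta> \<epsilon> x), sin (\<theta> \<epsilon> x))"
    and Phi_deriv: "\<And>\<epsilon>. \<epsilon> \<in> {0<..1} \<Longrightarrow> W11_deriv 0 L (\<lambda>x. Phi (\<theta> \<epsilon> x)) (dPhi\<theta> \<epsilon>)"
  shows "((\<lambda>\<epsilon>. flat_norm L (dens L (\<lambda>x. 2 * pi / (8 * sqrt 2) * dPhi\<theta> \<epsilon> x - d\<theta> \<epsilon> x)))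
            \<longlongrightarrow> 0) (at_right 0)
       \<and> (\<forall>(ek :: nat \<Rightarrow> real) N c xs.
            (\<forall>k. ek k \<in> {0<..1}) \<and> ek \<longlonglongrightarrow> 0 \<and> Mfin_data L N xs \<and>
            (\<lambda>k. flat_norm L (\<lambda>\<phi>. dens L (\<lambda>x. L / curve_length L (V (ek k)) * d\<theta> (ek k) x) \<phi>
                                   - atoms N c xs \<phi>)) \<longlonglongrightarrow> 0
            \<longrightarrow> (\<lambda>k. flat_norm L (\<lambda>\<phi>. dens L (\<lambda>x. 2 * pi / (8 * sqrt 2) * dPhi\<theta> (ek k) x) \<phi>
                                   - atoms N c xs \<phi>)) \<longlonglongrightarrow> 0)"
proof -
  have L0: "0 < L"
    using pq L_def by simp
  have W11: "W11_deriv 0 L (Y \<epsilon>) (V \<epsilon>)" "W11_deriv 0 L (\<theta> \<epsilon>) (d\<theta> \<epsilon>)"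
    "d\<theta> \<epsilon> absolutely_integrable_on {0..L}" "dPhi\<theta> \<epsilon> absolutely_integrable_on {0..L}"
    if "\<epsilon> \<in> {0<..1}" for \<epsilon>
    using H2[OF that] lift[OF that] Phi_deriv[OF that]
    by (auto simp: H2_derivs_def H1_deriv_def W11_deriv_def)
  have boundary: "Y \<epsilon> 0 = p" "Y \<epsilon> L = q" "snd (V \<epsilon> 0) = 0" "snd (V \<epsilon> L) = 0"
    if "\<epsilon> \<in> {0<..1}" for \<epsilon>
    using ends[OF that] horiz[OF that] by auto
  have length: "L \<le> curve_length L (V \<epsilon>)" if "\<epsilon> \<in> {0<..1}" for \<epsilon>
    using dist_le_curve_length[OF W11(1)[OF that]] boundary[OF that] L_def L0 by simp
  have defect: "0 \<le> flat_norm L (dens L (\<lambda>x. 2 * pi / (8 * sqrt 2) * dPhi\<theta> \<epsilon> x - d\<theta> \<epsilon> x))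
      \<and> flat_norm L (dens L (\<lambda>x. 2 * pi / (8 * sqrt 2) * dPhi\<theta> \<epsilon> x - d\<theta> \<epsilon> x))
        \<le> 3 * (C * sqrt \<epsilon> / sqrt (sqrt \<epsilon>) + L * sqrt (sqrt \<epsilon>) / 2)" if \<epsilon>: "\<epsilon> \<in> {0<..1}" for \<epsilon>
    using W11(3,4)[OF \<epsilon>] L0 len[OF \<epsilon>] L_def \<epsilon>
    by (intro conjI flat_norm_dens_nonneg set_integral_diff(1) set_integrable_mult_right
        flat_norm_Phi_defect_le[OF pq L_def W11(1)[OF \<epsilon>] boundary[OF \<epsilon>] _ W11(2)[OF \<epsilon>]
          lift_eq[OF \<epsilon>] Phi_deriv[OF \<epsilon>]]) auto
  have small: "\<forall>\<^sub>F \<epsilon> in at_right (0::real). \<epsilon> \<in> {0<..1}"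
    using eventually_at_right_real[OF zero_less_one] by (rule eventually_mono) auto
  have part1: "((\<lambda>\<epsilon>. flat_norm L (dens L (\<lambda>x. 2 * pi / (8 * sqrt 2) * dPhi\<theta> \<epsilon> x - d\<theta> \<epsilon> x)))
      \<longlongrightarrow> 0) (at_right 0)"
    by (rule tendsto_sandwich[OF _ _ tendsto_const,
          where h = "\<lambda>\<epsilon>. 3 * (C * sqrt \<epsilon> / sqrt (sqrt \<epsilon>) + L * sqrt (sqrt \<epsilon>) / 2)"])
      (use small defect in \<open>auto elim: eventually_mono\<close>, real_asymp)
  have length_lim: "((\<lambda>\<epsilon>. curve_length L (V \<epsilon>)) \<longlongrightarrow> L) (at_right 0)"
    by (rule tendsto_sandwich[OF _ _ tendsto_const, where h = "\<lambda>\<epsilon>. L + C * sqrt \<epsilon>"])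
      (use small length len L_def in \<open>auto elim: eventually_mono simp: algebra_simps\<close>, real_asymp)
  show ?thesis
  proof (intro conjI part1 allI impI, elim conjE)
    fix ek :: "nat \<Rightarrow> real" and N c xs
    assume ek: "\<forall>k. ek k \<in> {0<..1}" "ek \<longlonglongrightarrow> 0" and xs: "Mfin_data L N xs"
      and approx: "(\<lambda>k. flat_norm L (\<lambda>\<phi>. dens L (\<lambda>x. L / curve_length L (V (ek k)) * d\<theta> (ek k) x) \<phi>
        - atoms N c xs \<phi>)) \<longlonglongrightarrow> 0"
    have ek_lim: "filterlim ek (at_right 0) sequentially"
      using ek by (intro tendsto_imp_filterlim_at_right) auto
    show "(\<lambda>k. flat_norm L (\<lambda>\<phi>. dens L (\<lambda>x. 2 * pi / (8 * sqrt 2) * dPhi\<theta> (ek k) x) \<phi>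
        - atoms N c xs \<phi>)) \<longlonglongrightarrow> 0"
      using W11 length ek
      by (intro flat_norm_dens_minus_atoms_tendsto[OF L0 xs _ filterlim_compose[OF length_lim ek_lim]
          filterlim_compose[OF part1 ek_lim] approx]) auto
  qed
qed

end
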